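(* Consider the dynamic load balancing game described in the context, where every player follows the best-response algorithm. Then, with $t'=\max_{j\in[m]}\lceil s_j^0/\mu_j\rceil$, for every time $t\ge t'$ the player $i$ who receives the job at time $t$ distributes it among all the servers, i.e., $a_{ij}^t>0$ for all $j\in[m]$ and all $t\ge t'$.
   Context: Dynamic load balancing game: there are $m$ servers with service rates $\mu_j>0$ and $n$ players with job lengths $\lambda_i>0$; let $\lambda_{\max}=\max_i\lambda_i$, and assume $\lambda_{\max}<\sum_{j=1}^m\mu_j$. Time is discrete, $t=0,1,2,\dots$; the state at time $t$ is $s^t=(s_1^t,\dots,s_m^t)$ with $s_j^t\ge0$ the load on server $j$, and $s^0$ is the given initial state. At each time $t$ exactly one player $i$ receives a new job of length $\lambda_i$ and immediately chooses an action $a_i^t$ in the simplex $\{a:\sum_j a_j=1,a_j\ge0\}$, incurring cost $$D_i(a^t,s^t)=\sum_{j=1}^m\lambda_i a_{ij}^t\left(\frac{\lambda_i a_{ij}^t}{2\mu_j}+\frac{s_j^t}{\mu_j}\right),$$ after which the state evolves as $s_j^{t+1}=\max\{0,\ s_j^t+\lambda_i a_{ij}^t-\mu_j\}$ for all $j$. Best-response algorithm: the player $i$ receiving the job at time $t$ observes $s^t$ and chooses $a_i^t$ as the (unique) minimizer of $D_i(a_i,s^t)$ over the simplex (equivalently, the greedy water-filling rule: with servers sorted by $\mu_j/s_j^t$ in decreasing order, put mass on the first $c-1$ servers so that $(\lambda_i a_{ij}^t+s_j^t)/\mu_j$ is equal on them, where $c$ is the smallest index with $\frac{s_c^t}{\mu_c}\ge\frac{\lambda_i+\sum_{k<c}s_k^t}{\sum_{k<c}\mu_k}$,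 or $c=m+1$ if none). *)

theory Defs
  imports Complex_Main
begin

text \<open>Servers are indexed by 0..m-1; actions are functions nat => real,
  relevant only on indices below m.\<close>

definition simplex :: "nat \<Rightarrow> (nat \<Rightarrow> real) set" where
  "simplex m = {a. (\<forall>j<m. a j \<ge> 0) \<and> (\<Sum>j<m. a j) = 1}"

definition cost :: "nat \<Rightarrow> (nat \<Rightarrow> real) \<Rightarrow> real \<Rightarrow> (nat \<Rightarrow> real) \<Rightarrow> (nat \<Rightarrow> real) \<Rightarrow> real" where
  "cost m mu lam a s = (\<Sum>j<m. lam * a j * (lam * a j / (2 * mu j) + s j / mu j))"

definition best_response :: "nat \<Rightarrow> (nat \<Rightarrow> real) \<Rightarrow> real \<Rightarrow> (nat \<Rightarrow> real) \<Rightarrow> (nat \<Rightarrow> real) \<Rightarrow> bool" where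
  "best_response m mu lam s a \<longleftrightarrow>
     a \<in> simplex m \<and> (\<forall>b\<in>simplex m. cost m mu lam a s \<le> cost m mu lam b s)"

end

theory Submission
  imports Defs
begin

text \<open>Write \<open>s j / mu j\<close> for the waiting time of server \<open>j\<close> and
  \<open>(L * a j + s j) / mu j\<close> for its waiting time after the new job is split according to \<open>a\<close>.
  Moving a little mass from a server with larger post-assignment waiting time to one with
  smaller waiting time lowers the cost to first order, so a best response puts mass only on
  servers of minimal post-assignment waiting time. Consequently, if all waiting times are
  equal, the best response uses every server and they stay equal after one time unit of
  service; and if some server is left out, every post-assignment waiting time is at most the
  current maximal waiting time, which therefore drops by one (until it reaches zero). Hence
  after \<open>t' = max\<^sub>j \<lceil>s\<^sub>j\<^sup>0 / \<mu>\<^sub>j\<rceil>\<close> steps the waiting times are equal, and they stay equal.\<close>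

definition balanced :: "nat \<Rightarrow> (nat \<Rightarrow> real) \<Rightarrow> (nat \<Rightarrow> real) \<Rightarrow> bool" where
  "balanced m mu s \<longleftrightarrow> (\<forall>j<m. \<forall>k<m. s j / mu j = s k / mu k)"

lemma balanced_if_all_zero:
  assumes "\<forall>j<m. s j / mu j = 0"
  shows "balanced m mu s"
  using assms unfolding balanced_def by metis

lemma simplex_nonneg:
  "a \<in> simplex m \<Longrightarrow> j < m \<Longrightarrow> a j \<ge> 0"
  unfolding simplex_def by simp

lemma simplex_exists_pos:
  assumes "a \<in> simplex m"
  shows "\<exists>j<m. a j > 0"
proof (rule ccontr)
  assume "\<not> ?thesis"
  then have "(\<Sum>j<m. a j) \<le> 0" by (intro sum_nonpos) auto
  then show False using assms unfolding simplex_def by simp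
qed

lemma sum_lessThan_two_support:
  fixes h :: "nat \<Rightarrow> 'a::comm_monoid_add"
  assumes "j < m" "k < m" "j \<noteq> k" "\<And>i. i \<noteq> j \<Longrightarrow> i \<noteq> k \<Longrightarrow> h i = 0"
  shows "(\<Sum>i<m. h i) = h j + h k"
proof -
  have "(\<Sum>i<m. h i) = (\<Sum>i\<in>{j, k}. h i)"
    by (rule sum.mono_neutral_right) (use assms in auto)
  then show ?thesis using assms(3) by simp
qed

lemma simplex_transfer:
  assumes "a \<in> simplex m" "j < m" "k < m" "j \<noteq> k" "0 \<le> e" "e \<le> a j"
  shows "a(j := a j - e, k := a k + e) \<in> simplex m"
proof -
  let ?b = "a(j := a j - e, k := a k + e)"
  have "(\<Sum>i<m. ?b i) - (\<Sum>i<m. a i) = (\<Sum>i<m. ?b i - a i)"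
    by (simp add: sum_subtractf)
  also have "\<dots> = (?b j - a j) + (?b k - a k)"
    by (rule sum_lessThan_two_support) (use assms(2-4) in auto)
  also have "\<dots> = 0" using assms(4) by simp
  finally show ?thesis
    using assms unfolding simplex_def by auto
qed

lemma cost_transfer:
  assumes "j < m" "k < m" "j \<noteq> k" "mu j \<noteq> 0" "mu k \<noteq> 0"
  shows "cost m mu L (a(j := a j - e, k := a k + e)) s - cost m mu L a s
    = e * L * (e * L * (1 / (2 * mu j) + 1 / (2 * mu k))
               - ((L * a j + s j) / mu j - (L * a k + s k) / mu k))"
proof -
  define F where "F c i = L * c i * (L * c i / (2 * mu i) + s i / mu i)" for c i
  let ?b = "a(j := a j - e, k := a k + e)"
  have "cost m mu L ?b s - cost m mu L a s = (\<Sum>i<m. F ?b i - F a i)"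
    unfolding cost_def F_def by (simp add: sum_subtractf)
  also have "\<dots> = (F ?b j - F a j) + (F ?b k - F a k)"
    by (rule sum_lessThan_two_support) (use assms(1-3) in \<open>auto simp: F_def\<close>)
  also have "\<dots> = e * L * (e * L * (1 / (2 * mu j) + 1 / (2 * mu k))
               - ((L * a j + s j) / mu j - (L * a k + s k) / mu k))"
    unfolding F_def using assms(3-5) by (simp add: field_simps)
  finally show ?thesis .
qed

lemma best_response_waiting_le:
  assumes mu: "\<forall>j<m. mu j > 0" and L: "L > 0" and br: "best_response m mu L s a"
    and j: "j < m" "a j > 0" and k: "k < m"
  shows "(L * a j + s j) / mu j \<le> (L * a k + s k) / mu k"
proof (rule ccontr)
  define D where "D = (L * a j + s j) / mu j - (L * a k + s k) / mu k"
  define C where "C = 1 / (2 * mu j) + 1 / (2 * mu k)"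
  assume "\<not> ?thesis"
  then have D: "D > 0" unfolding D_def by simp
  then have jk: "j \<noteq> k" unfolding D_def by auto
  have C: "C > 0" unfolding C_def using mu j k by (simp add: add_pos_pos)
  \<comment> \<open>the quadratic term \<open>(e L)\<^sup>2 C\<close> of the cost change is at most half the linear gain \<open>e L D\<close>\<close>
  define e where "e = min (a j) (D / (2 * L * C))"
  have e: "0 < e" "e \<le> a j" unfolding e_def using j D L C by auto
  have "e * (L * C) \<le> D / (2 * L * C) * (L * C)"
    unfolding e_def using L C by (intro mult_right_mono) auto
  also have "\<dots> = D / 2" using L C by (simp add: field_simps)
  finally have "e * L * (e * L * C - D) < 0"
    using e L D by (intro mult_pos_neg) (auto simp: mult.assoc)
  moreover have "cost m mu L a s \<le> cost m mu L (a(j := a j - e, k := a k + e)) s"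
    using br simplex_transfer[OF _ j(1) k jk] e
    unfolding best_response_def by (simp add: less_imp_le)
  moreover have "mu j \<noteq> 0" "mu k \<noteq> 0" using mu j k by auto
  ultimately show False
    using cost_transfer[OF j(1) k jk, of mu L a e s] unfolding C_def D_def by linarith
qed

lemma best_response_pos_if_balanced:
  assumes mu: "\<forall>j<m. mu j > 0" and L: "L > 0" and br: "best_response m mu L s a"
    and bal: "balanced m mu s" and k: "k < m"
  shows "a k > 0"
proof (rule ccontr)
  assume "\<not> a k > 0"
  moreover have "a k \<ge> 0"
    using br k simplex_nonneg unfolding best_response_def by blast
  ultimately have ak: "a k = 0" by simp
  obtain j where j: "j < m" "a j > 0"
    using br simplex_exists_pos unfolding best_response_def by blast
  have "(L * a j + s j) / mu j \<le> s k / mu k"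
    using best_response_waiting_le[OF mu L br j k] ak by simp
  also have "\<dots> = s j / mu j" using bal j(1) k unfolding balanced_def by blast
  finally have "L * a j / mu j \<le> 0" by (simp add: add_divide_distrib)
  moreover have "L * a j / mu j > 0" using L j mu by simp
  ultimately show False by simp
qed

lemma served_waiting_time:
  fixes mu :: real
  assumes "mu > 0"
  shows "max 0 (x - mu) / mu = max 0 (x / mu - 1)"
  using assms by (auto simp: max_def field_simps)

lemma balanced_after_full_support:
  assumes mu: "\<forall>j<m. mu j > 0" and L: "L > 0" and br: "best_response m mu L s a"
    and ev: "\<forall>j<m. s' j = max 0 (s j + L * a j - mu j)"
    and pos: "\<forall>j<m. a j > 0"
  shows "balanced m mu s'"
  unfolding balanced_def
proof (intro allI impI)
  fix j k assume j: "j < m" and k: "k < m"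
  have "(L * a j + s j) / mu j = (L * a k + s k) / mu k"
    using best_response_waiting_le[OF mu L br j _ k] best_response_waiting_le[OF mu L br k _ j]
      pos j k by (auto intro: order.antisym)
  then show "s' j / mu j = s' k / mu k"
    using ev served_waiting_time mu j k by (simp add: add.commute)
qed

lemma max_waiting_time_decreases:
  assumes mu: "\<forall>j<m. mu j > 0" and L: "L > 0" and br: "best_response m mu L s a"
    and ev: "\<forall>j<m. s' j = max 0 (s j + L * a j - mu j)"
    and k: "k < m" "a k = 0" and bound: "\<forall>j<m. s j / mu j \<le> B"
  shows "\<forall>j<m. s' j / mu j \<le> max 0 (B - 1)"
proof (intro allI impI)
  fix j assume j: "j < m"
  have "(L * a j + s j) / mu j \<le> B"
  proof (cases "a j > 0")
    case True
    then have "(L * a j + s j) / mu j \<le> s k / mu k"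
      using best_response_waiting_le[OF mu L br j(1) _ k(1)] k(2) by simp
    then show ?thesis using bound k(1) by fastforce
  next
    case False
    then have "a j = 0"
      using br j simplex_nonneg unfolding best_response_def by fastforce
    then show ?thesis using bound j by simp
  qed
  then show "s' j / mu j \<le> max 0 (B - 1)"
    using ev served_waiting_time mu j by (simp add: add.commute)
qed

lemma best_response_dynamics_full_support:
  fixes T :: nat
  assumes mu: "\<forall>j<m. mu j > 0" and L: "\<forall>t. L t > 0"
    and s0: "\<forall>j<m. 0 \<le> s 0 j \<and> s 0 j / mu j \<le> T"
    and br: "\<forall>t. best_response m mu (L t) (s t) (a t)"
    and ev: "\<forall>t. \<forall>j<m. s (Suc t) j = max 0 (s t j + L t * a t j - mu j)"
    and t: "T \<le> t" and j: "j < m"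
  shows "a t j > 0"
proof -
  have step_br: "best_response m mu (L t) (s t) (a t)" "L t > 0"
    and step_ev: "\<forall>j<m. s (Suc t) j = max 0 (s t j + L t * a t j - mu j)" for t
    using L br ev by blast+
  have inv: "balanced m mu (s t) \<or> (\<forall>j<m. s t j / mu j \<le> max 0 (real T - real t))" for t
  proof (induction t)
    case 0
    show ?case using s0 by (intro disjI2) simp
  next
    case (Suc t)
    show ?case
    proof (cases "\<forall>j<m. a t j > 0")
      case True
      then show ?thesis
        using balanced_after_full_support[OF mu step_br(2) step_br(1) step_ev] by blast
    next
      case False
      then obtain k where k: "k < m" "\<not> a t k > 0" by blast
      moreover have "a t k \<ge> 0"
        using k(1) step_br(1) simplex_nonneg unfolding best_response_def by blast
      ultimately have k0: "a t k = 0" by simp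
      have "\<not> balanced m mu (s t)"
        using best_response_pos_if_balanced[OF mu step_br(2) step_br(1) _ k(1)] k(2) by blast
      then have "\<forall>j<m. s t j / mu j \<le> max 0 (real T - real t)" using Suc.IH by blast
      then have "\<forall>j<m. s (Suc t) j / mu j \<le> max 0 (max 0 (real T - real t) - 1)"
        by (rule max_waiting_time_decreases[OF mu step_br(2) step_br(1) step_ev k(1) k0])
      then show ?thesis by (intro disjI2) auto
    qed
  qed
  have nonneg: "0 \<le> s t j" if "j < m" for j
  proof (cases t)
    case 0
    then show ?thesis using s0 that by simp
  next
    case (Suc t')
    then show ?thesis using step_ev[of t'] that by simp
  qed
  have "balanced m mu (s t)"
  proof (rule ccontr)
    assume unbalanced: "\<not> balanced m mu (s t)"
    have "s t j / mu j = 0" if "j < m" for j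
    proof (rule order.antisym)
      show "s t j / mu j \<le> 0" using inv[of t] unbalanced t that by fastforce
      show "0 \<le> s t j / mu j" using nonneg[OF that] mu that by (simp add: divide_nonneg_pos)
    qed
    then show False using unbalanced balanced_if_all_zero by blast
  qed
  then show ?thesis by (rule best_response_pos_if_balanced[OF mu step_br(2) step_br(1) _ j])
qed

theorem lemma2:
  fixes m n :: nat
    and mu :: "nat \<Rightarrow> real"          \<comment> \<open>service rates\<close>
    and lam :: "nat \<Rightarrow> real"         \<comment> \<open>job lengths of players\<close>
    and p :: "nat \<Rightarrow> nat"            \<comment> \<open>player receiving the job at time t\<close>
    and s :: "nat \<Rightarrow> nat \<Rightarrow> real"   \<comment> \<open>s t j: load of server j at time t\<close>
    and a :: "nat \<Rightarrow> nat \<Rightarrow> real"   \<comment> \<open>a t j: fraction sent to server j at time t\<close>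
  assumes mu_pos: "\<forall>j<m. mu j > 0"
    and n_pos: "n > 0"
    and lam_pos: "\<forall>i<n. lam i > 0"
    and lam_max: "Max (lam ` {..<n}) < (\<Sum>j<m. mu j)"
    and s0_nonneg: "\<forall>j<m. s 0 j \<ge> 0"
    and player: "\<forall>t. p t < n"
    and br: "\<forall>t. best_response m mu (lam (p t)) (s t) (a t)"
    and evol: "\<forall>t. \<forall>j<m. s (Suc t) j = max 0 (s t j + lam (p t) * a t j - mu j)"
  shows "\<forall>t \<ge> Max ((\<lambda>j. nat \<lceil>s 0 j / mu j\<rceil>) ` {..<m}). \<forall>j<m. a t j > 0"
proof -
  define T where "T = Max ((\<lambda>j. nat \<lceil>s 0 j / mu j\<rceil>) ` {..<m})"
  have "s 0 j / mu j \<le> T" if "j < m" for j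
  proof -
    have "s 0 j / mu j \<le> real (nat \<lceil>s 0 j / mu j\<rceil>)" by linarith
    also have "\<dots> \<le> T" unfolding T_def using that by (intro of_nat_mono Max_ge) auto
    finally show ?thesis .
  qed
  then have s0: "\<forall>j<m. 0 \<le> s 0 j \<and> s 0 j / mu j \<le> T" using s0_nonneg by blast
  have "\<forall>t. lam (p t) > 0" using lam_pos player by blast
  from best_response_dynamics_full_support[OF mu_pos this s0 br evol]
  show ?thesis unfolding T_def by blast
qed

end
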